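(* Let $\mathcal{C}\subset\mathbb{R}^n$ be a bounded open convex set with Hilbert distance $d_{\mathcal{C}}$ and Finsler norm $\|\cdot\|_{\mathcal{C}}$, let $x\in\mathcal{C}$ and $R>0$. Then $$\left(\frac{e^{2R}-1}{2e^{2R}}\right)^n\leq\frac{\mathrm{vol}_e B_R(x)}{\mathrm{vol}_e TB_1(x)}\leq\left(\frac{e^{2R}-1}{2}\right)^n .$$
   Context: $d_{\mathcal{C}}(p,q)=\frac12\ln\Big(\frac{\|q-a\|_e}{\|p-a\|_e}\cdot\frac{\|p-b\|_e}{\|q-b\|_e}\Big)$, where the line through distinct $p,q$ meets $\partial\mathcal{C}$ in $a,b$ with $a,p,q,b$ in this order. Finsler norm $\|u\|_{\mathcal{C}}=\frac12\|u\|_e\big(\frac1{\|p-p^+\|_e}+\frac1{\|p-p^-\|_e}\big)$ for $u\in T_p\mathcal{C}=\mathbb{R}^n$, $p^\pm$ the intersections of the line $p+\mathbb{R}u$ with $\partial\mathcal{C}$. $B_R(x)=\{y\in\mathcal{C}:d_{\mathcal{C}}(x,y)<R\}$, $TB_1(x)=\{u\in\mathbb{R}^n:\|u\|_{\mathcal{C}}<1\}$ (norm at $x$); $\mathrm{vol}_e$ Euclidean volume. *)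

theory Defs
  imports "HOL-Analysis.Analysis"
begin

text \<open>The boundary point hit by the open ray from p in direction u (u \<noteq> 0).
  For a bounded open convex set C and p \<in> C this point exists and is unique.\<close>
definition ray_exit :: "'a::euclidean_space set \<Rightarrow> 'a \<Rightarrow> 'a \<Rightarrow> 'a" where
  "ray_exit C p u = (THE q. q \<in> frontier C \<and> (\<exists>t>0. q = p + t *\<^sub>R u))"

text \<open>Hilbert distance: the line through p, q meets the boundary in a, b with
  a, p, q, b in this order.\<close>
definition hilbert_dist :: "'a::euclidean_space set \<Rightarrow> 'a \<Rightarrow> 'a \<Rightarrow> real" where
  "hilbert_dist C p q =
    (if p = q then 0
     else (let a = ray_exit C p (p - q); b = ray_exit C p (q - p)
           in ln ((norm (q - a) / norm (p - a)) * (norm (p - b) / norm (q - b))) / 2))"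

text \<open>Finsler norm at p of the tangent vector u; p^+ and p^- are the intersections of
  the line p + R u with the boundary.\<close>
definition finsler_norm :: "'a::euclidean_space set \<Rightarrow> 'a \<Rightarrow> 'a \<Rightarrow> real" where
  "finsler_norm C p u =
    (if u = 0 then 0
     else norm u / 2 * (1 / norm (p - ray_exit C p u) + 1 / norm (p - ray_exit C p (- u))))"

definition hilbert_ball :: "'a::euclidean_space set \<Rightarrow> 'a \<Rightarrow> real \<Rightarrow> 'a set" where
  "hilbert_ball C x R = {y \<in> C. hilbert_dist C x y < R}"

definition tangent_unit_ball :: "'a::euclidean_space set \<Rightarrow> 'a \<Rightarrow> 'a set" where
  "tangent_unit_ball C x = {u. finsler_norm C x u < 1}"

end

theory Submission
  imports Defs
begin

text \<open>Let \<open>g\<close> be the Minkowski gauge of \<open>C\<close> centred at \<open>x\<close>, so that the ray from \<open>x\<close> in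
  direction \<open>u\<close> leaves \<open>C\<close> at \<open>x + u / g u\<close>, and let \<open>E = exp (2 R)\<close>. The Finsler unit ball
  at \<open>x\<close> is \<open>{u. g u + g (-u) < 2}\<close>, and evaluating the cross ratio at these boundary points
  shows that the Hilbert ball is \<open>{x + v. E g v + g (-v) < E - 1}\<close>. Since \<open>g\<close> is positively
  homogeneous and \<open>E \<ge> 1\<close>, the Hilbert ball contains the Finsler unit ball scaled by
  \<open>(E - 1) / (2 E)\<close> and is contained in it scaled by \<open>(E - 1) / 2\<close> (both translated to \<open>x\<close>),
  and a homothety of ratio \<open>c\<close> multiplies volumes by \<open>c\<^sup>n\<close>.\<close>

lemma measure_affine_image_le:
  fixes S T :: "'a::euclidean_space set"
  assumes "S \<in> lmeasurable" "T \<in> lmeasurable" "(\<lambda>v. c *\<^sub>R v + b) ` S \<subseteq> T"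
  shows "\<bar>c\<bar> ^ DIM('a) * measure lebesgue S \<le> measure lebesgue T"
proof -
  have "emeasure lebesgue ((\<lambda>v. c *\<^sub>R v + b) ` S) \<le> emeasure lebesgue T"
    using assms(2,3) by (intro emeasure_mono) auto
  then have "ennreal (\<bar>c\<bar> ^ DIM('a)) * ennreal (measure lebesgue S) \<le> ennreal (measure lebesgue T)"
    unfolding emeasure_lebesgue_affine emeasure_eq_measure2[OF assms(1)]
      emeasure_eq_measure2[OF assms(2)] .
  then show ?thesis
    by (simp add: ennreal_mult'[symmetric] ennreal_le_iff)
qed

lemma measure_le_affine_image:
  fixes S T :: "'a::euclidean_space set"
  assumes "S \<in> lmeasurable" "T \<in> lmeasurable" "c \<noteq> 0" "S \<subseteq> (\<lambda>v. c *\<^sub>R v + b) ` T"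
  shows "measure lebesgue S \<le> \<bar>c\<bar> ^ DIM('a) * measure lebesgue T"
proof -
  have "(\<lambda>y. (1 / c) *\<^sub>R y + - ((1 / c) *\<^sub>R b)) ` S \<subseteq> T"
    using assms(3,4) by (auto simp: algebra_simps)
  then have "\<bar>1 / c\<bar> ^ DIM('a) * measure lebesgue S \<le> measure lebesgue T"
    by (rule measure_affine_image_le[OF assms(1,2)])
  then show ?thesis
    using assms(3) by (simp add: field_simps power_divide)
qed

lemma convex_ray_beyond_frontier:
  fixes C :: "'a::euclidean_space set"
  assumes "convex C" "x \<in> interior C" "0 < d" "d < s" "x + d *\<^sub>R u \<in> frontier C"
  shows "x + s *\<^sub>R u \<notin> closure C"
proof
  assume "x + s *\<^sub>R u \<in> closure C"
  then have "open_segment x (x + s *\<^sub>R u) \<subseteq> interior C"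
    using in_interior_closure_convex_segment[OF assms(1,2)] by blast
  moreover have "x + d *\<^sub>R u \<in> open_segment x (x + s *\<^sub>R u)"
  proof -
    have "x + d *\<^sub>R u = (1 - d / s) *\<^sub>R x + (d / s) *\<^sub>R (x + s *\<^sub>R u)"
      using assms(3,4) by (simp add: algebra_simps)
    moreover have "x \<noteq> x + s *\<^sub>R u"
      using assms(2-5) by (auto simp: frontier_def)
    moreover have "0 < d / s" "d / s < 1"
      using assms(3,4) by simp_all
    ultimately show ?thesis
      unfolding in_segment by blast
  qed
  ultimately show False
    using assms(5) by (auto simp: frontier_def)
qed

lemma ray_exit_scaleR:
  assumes "c > 0"
  shows "ray_exit C p (c *\<^sub>R u) = ray_exit C p u"
proof -
  have "(\<exists>t>0. q = p + t *\<^sub>R c *\<^sub>R u) \<longleftrightarrow> (\<exists>t>0. q = p + t *\<^sub>R u)" for q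
  proof
    assume "\<exists>t>0. q = p + t *\<^sub>R c *\<^sub>R u"
    then show "\<exists>t>0. q = p + t *\<^sub>R u"
      using assms by (metis mult_pos_pos scaleR_scaleR)
  next
    assume "\<exists>t>0. q = p + t *\<^sub>R u"
    then obtain t where "t > 0" "q = p + t *\<^sub>R u" by blast
    then show "\<exists>t>0. q = p + t *\<^sub>R c *\<^sub>R u"
      using assms by (intro exI[of _ "t / c"]) auto
  qed
  then show ?thesis
    unfolding ray_exit_def by simp
qed

definition minkowski_gauge :: "'a::euclidean_space set \<Rightarrow> 'a \<Rightarrow> 'a \<Rightarrow> real" where
  "minkowski_gauge C x u = norm u / norm (x - ray_exit C x u)"

lemma minkowski_gauge_nonneg: "minkowski_gauge C x u \<ge> 0"
  by (simp add: minkowski_gauge_def)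

lemma minkowski_gauge_zero [simp]: "minkowski_gauge C x 0 = 0"
  by (simp add: minkowski_gauge_def)

lemma minkowski_gauge_scaleR:
  assumes "c \<ge> 0"
  shows "minkowski_gauge C x (c *\<^sub>R u) = c * minkowski_gauge C x u"
  using assms by (cases "c = 0") (simp_all add: minkowski_gauge_def ray_exit_scaleR)

lemma finsler_norm_eq_minkowski_gauge:
  "finsler_norm C x u = (minkowski_gauge C x u + minkowski_gauge C x (- u)) / 2"
  by (cases "u = 0") (simp_all add: finsler_norm_def minkowski_gauge_def distrib_left)

lemma tangent_unit_ball_eq_minkowski_gauge:
  "tangent_unit_ball C x = {u. minkowski_gauge C x u + minkowski_gauge C x (- u) < 2}"
  by (simp add: tangent_unit_ball_def finsler_norm_eq_minkowski_gauge)

locale hilbert_domain =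
  fixes C :: "'a::euclidean_space set" and x :: 'a
  assumes bounded_C: "bounded C" and open_C: "open C" and convex_C: "convex C"
    and centre_in_C: "x \<in> C"
begin

abbreviation g :: "'a \<Rightarrow> real" where
  "g \<equiv> minkowski_gauge C x"

lemma ray_exit_exists:
  assumes "u \<noteq> 0"
  obtains d where "d > 0" "ray_exit C x u = x + d *\<^sub>R u"
    "\<And>s. s \<ge> 0 \<Longrightarrow> x + s *\<^sub>R u \<in> C \<longleftrightarrow> s < d"
proof -
  have interior_C: "interior C = C"
    using open_C by (rule interior_open)
  then have x_int: "x \<in> interior C"
    using centre_in_C by simp
  obtain d where d: "0 < d" "x + d *\<^sub>R u \<in> frontier C"
    "\<And>e. \<lbrakk>0 \<le> e; e < d\<rbrakk> \<Longrightarrow> x + e *\<^sub>R u \<in> C"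
    using ray_to_frontier[OF bounded_C x_int assms, unfolded interior_C] by blast
  have frontier_disjoint: "frontier C \<inter> C = {}"
    using interior_C by (auto simp: frontier_def)
  have beyond: "x + s *\<^sub>R u \<notin> C" if "s > d" for s
    using convex_ray_beyond_frontier[OF convex_C x_int d(1) that d(2)] closure_subset by blast
  have "ray_exit C x u = x + d *\<^sub>R u"
    unfolding ray_exit_def
  proof (rule the_equality)
    fix q assume "q \<in> frontier C \<and> (\<exists>t>0. q = x + t *\<^sub>R u)"
    then obtain t where t: "t > 0" "q = x + t *\<^sub>R u" "q \<in> frontier C" by blast
    have "\<not> t < d"
      using d(3)[of t] t frontier_disjoint by auto
    moreover have "\<not> t > d"
      using convex_ray_beyond_frontier[OF convex_C x_int d(1) _ d(2), of t] t
      by (auto simp: frontier_def)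
    ultimately show "q = x + d *\<^sub>R u"
      using t by simp
  qed (use d in auto)
  moreover have "x + s *\<^sub>R u \<in> C \<longleftrightarrow> s < d" if "s \<ge> 0" for s
    using d(2) d(3)[of s] beyond[of s] frontier_disjoint that by (cases s d rule: linorder_cases) auto
  ultimately show ?thesis
    using d(1) that by blast
qed

lemma minkowski_gauge_pos_and_ray_exit:
  assumes "u \<noteq> 0"
  shows "g u > 0" "ray_exit C x u = x + (1 / g u) *\<^sub>R u"
    "\<And>s. s \<ge> 0 \<Longrightarrow> x + s *\<^sub>R u \<in> C \<longleftrightarrow> s * g u < 1"
proof -
  obtain d where d: "d > 0" "ray_exit C x u = x + d *\<^sub>R u"
    "\<And>s. s \<ge> 0 \<Longrightarrow> x + s *\<^sub>R u \<in> C \<longleftrightarrow> s < d"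
    using ray_exit_exists[OF assms] by blast
  have g_eq: "g u = 1 / d"
    using d(1,2) assms by (simp add: minkowski_gauge_def)
  show "g u > 0" "ray_exit C x u = x + (1 / g u) *\<^sub>R u"
    using g_eq d by simp_all
  show "x + s *\<^sub>R u \<in> C \<longleftrightarrow> s * g u < 1" if "s \<ge> 0" for s
    using d(3)[OF that] d(1) unfolding g_eq by (simp add: divide_simps)
qed

lemma minkowski_gauge_less_iff:
  assumes "s > 0"
  shows "g u < s \<longleftrightarrow> x + (1 / s) *\<^sub>R u \<in> C"
proof (cases "u = 0")
  case True
  then show ?thesis
    using assms centre_in_C by simp
next
  case False
  have "x + (1 / s) *\<^sub>R u \<in> C \<longleftrightarrow> (1 / s) * g u < 1"
    using minkowski_gauge_pos_and_ray_exit(3)[OF False, of "1 / s"] assms by simp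
  also have "\<dots> \<longleftrightarrow> g u < s"
    using assms by (simp add: field_simps)
  finally show ?thesis by simp
qed

lemma norm_div_le_minkowski_gauge:
  assumes "C \<subseteq> ball x M"
  shows "norm u / M \<le> g u"
proof (rule ccontr)
  assume "\<not> ?thesis"
  then have less: "g u < norm u / M" by simp
  then have pos: "norm u / M > 0"
    using minkowski_gauge_nonneg[of C x u] by linarith
  then have "x + (1 / (norm u / M)) *\<^sub>R u \<in> C"
    using minkowski_gauge_less_iff less by blast
  then have "norm ((1 / (norm u / M)) *\<^sub>R u) < M"
    using assms by (auto simp: dist_norm)
  moreover have "norm ((1 / (norm u / M)) *\<^sub>R u) = M"
    using pos by (auto simp: zero_less_divide_iff)
  ultimately show False by simp
qed

lemma borel_measurable_minkowski_gauge: "g \<in> borel_measurable borel"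
proof -
  have "open {u. g u < a}" for a
  proof (cases "a > 0")
    case False
    then have "{u. g u < a} = {}"
      using minkowski_gauge_nonneg[of C x] by (auto simp: not_less intro: order.trans)
    then show ?thesis by simp
  next
    case True
    then have "{u. g u < a} = (\<lambda>u. x + (1 / a) *\<^sub>R u) -` C"
      using minkowski_gauge_less_iff by auto
    moreover have "open ((\<lambda>u. x + (1 / a) *\<^sub>R u) -` C)"
      by (rule continuous_open_vimage[OF open_C]) (intro continuous_intros)
    ultimately show ?thesis by simp
  qed
  then show ?thesis
    unfolding borel_measurable_iff_less by (simp add: borel_open)
qed

lemma hilbert_dist_eq_minkowski_gauge:
  assumes "y \<in> C" "y \<noteq> x"
  shows "hilbert_dist C x y = ln ((1 + g (x - y)) / (1 - g (y - x))) / 2"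
proof -
  define \<alpha> where "\<alpha> = g (x - y)"
  define \<beta> where "\<beta> = g (y - x)"
  have "y - x \<noteq> 0" "x - y \<noteq> 0"
    using assms(2) by auto
  note exit_xy = minkowski_gauge_pos_and_ray_exit[OF this(1)]
    and exit_yx = minkowski_gauge_pos_and_ray_exit[OF this(2)]
  have \<beta>: "0 < \<beta>" "\<beta> < 1"
    using exit_xy(1) minkowski_gauge_less_iff[of 1 "y - x"] assms(1) unfolding \<beta>_def by auto
  have \<alpha>: "0 < \<alpha>"
    using exit_yx(1) unfolding \<alpha>_def .
  have "norm (y - x) > 0"
    using assms(2) by simp
  have exits: "y - ray_exit C x (x - y) = (1 + 1 / \<alpha>) *\<^sub>R (y - x)"
    "x - ray_exit C x (x - y) = (1 / \<alpha>) *\<^sub>R (y - x)"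
    "x - ray_exit C x (y - x) = - ((1 / \<beta>) *\<^sub>R (y - x))"
    "y - ray_exit C x (y - x) = (1 - 1 / \<beta>) *\<^sub>R (y - x)"
    unfolding exit_xy(2) exit_yx(2) \<alpha>_def \<beta>_def by (simp_all add: algebra_simps)
  have "\<bar>1 - 1 / \<beta>\<bar> = 1 / \<beta> - 1"
    using \<beta> by (simp add: field_simps)
  with \<open>norm (y - x) > 0\<close> have "(norm (y - ray_exit C x (x - y)) / norm (x - ray_exit C x (x - y))) *
      (norm (x - ray_exit C x (y - x)) / norm (y - ray_exit C x (y - x))) = (1 + \<alpha>) / (1 - \<beta>)"
    unfolding exits norm_minus_cancel norm_scaleR using \<alpha> \<beta> by (simp add: field_simps)
  then show ?thesis
    using assms(2) unfolding hilbert_dist_def Let_def \<alpha>_def \<beta>_def by simp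
qed

lemma hilbert_ball_eq_minkowski_gauge:
  "hilbert_ball C x R = {y. exp (2 * R) * g (y - x) + g (x - y) < exp (2 * R) - 1}"
proof (intro set_eqI)
  fix y
  define E where "E = exp (2 * R)"
  have "E > 0"
    unfolding E_def by simp
  consider "y = x" | "y \<notin> C" | "y \<in> C" "y \<noteq> x" by blast
  then show "y \<in> hilbert_ball C x R \<longleftrightarrow> y \<in> {y. E * g (y - x) + g (x - y) < E - 1}"
  proof cases
    case 1
    then show ?thesis
      using centre_in_C by (simp add: hilbert_ball_def hilbert_dist_def E_def)
  next
    case 2
    then have "1 \<le> g (y - x)"
      using minkowski_gauge_less_iff[of 1 "y - x"] by (simp add: not_less)
    then have "\<not> E * g (y - x) + g (x - y) < E - 1"
      using \<open>E > 0\<close> minkowski_gauge_nonneg[of C x "x - y"]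
        mult_left_mono[of 1 "g (y - x)" E] by linarith
    with 2 show ?thesis
      by (simp add: hilbert_ball_def)
  next
    case 3
    have \<beta>: "g (y - x) < 1"
      using minkowski_gauge_less_iff[of 1 "y - x"] 3(1) by simp
    have ratio_pos: "(1 + g (x - y)) / (1 - g (y - x)) > 0"
      using \<beta> minkowski_gauge_nonneg[of C x "x - y"] by simp
    have "hilbert_dist C x y < R \<longleftrightarrow> ln ((1 + g (x - y)) / (1 - g (y - x))) < ln E"
      unfolding hilbert_dist_eq_minkowski_gauge[OF 3] E_def by (simp add: mult.commute)
    also have "\<dots> \<longleftrightarrow> 1 + g (x - y) < E * (1 - g (y - x))"
      using ratio_pos \<open>E > 0\<close> \<beta> by (simp add: divide_simps)
    also have "\<dots> \<longleftrightarrow> E * g (y - x) + g (x - y) < E - 1"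
      by (simp add: algebra_simps)
    finally show ?thesis
      using 3 by (simp add: hilbert_ball_def)
  qed
qed

lemma lmeasurable_tangent_unit_ball: "tangent_unit_ball C x \<in> lmeasurable"
proof (rule bounded_set_imp_lmeasurable)
  obtain M where M: "C \<subseteq> ball x M"
    using bounded_subset_ballD[OF bounded_C] by blast
  then have "M > 0"
    using centre_in_C by auto
  have "tangent_unit_ball C x \<subseteq> ball 0 M"
  proof
    fix u
    assume "u \<in> tangent_unit_ball C x"
    then have "2 * norm u / M < 2"
      using norm_div_le_minkowski_gauge[OF M, of u] norm_div_le_minkowski_gauge[OF M, of "- u"]
      by (simp add: tangent_unit_ball_eq_minkowski_gauge)
    then show "u \<in> ball 0 M"
      using \<open>M > 0\<close> by (simp add: divide_simps)
  qed
  then show "bounded (tangent_unit_ball C x)"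
    using bounded_subset by blast
  note borel_measurable_minkowski_gauge [measurable]
  have "{u \<in> space borel. g u + g (- u) < 2} \<in> sets borel"
    by measurable
  then show "tangent_unit_ball C x \<in> sets lebesgue"
    unfolding tangent_unit_ball_eq_minkowski_gauge by (simp add: sets_completionI_sets)
qed

lemma lmeasurable_hilbert_ball: "hilbert_ball C x R \<in> lmeasurable"
proof (rule bounded_set_imp_lmeasurable)
  show "bounded (hilbert_ball C x R)"
    by (rule bounded_subset[OF bounded_C]) (auto simp: hilbert_ball_def)
  note borel_measurable_minkowski_gauge [measurable]
  have "{y \<in> space borel. exp (2 * R) * g (y - x) + g (x - y) < exp (2 * R) - 1} \<in> sets borel"
    by measurable
  then show "hilbert_ball C x R \<in> sets lebesgue"
    unfolding hilbert_ball_eq_minkowski_gauge by (simp add: sets_completionI_sets)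
qed

lemma measure_tangent_unit_ball_pos: "0 < measure lebesgue (tangent_unit_ball C x)"
proof -
  obtain r where r: "r > 0" "ball x r \<subseteq> C"
    using open_C centre_in_C open_contains_ball by blast
  have "ball 0 r \<subseteq> tangent_unit_ball C x"
  proof
    fix u :: 'a
    assume "u \<in> ball 0 r"
    then have "x + (1 / 1) *\<^sub>R u \<in> C" "x + (1 / 1) *\<^sub>R (- u) \<in> C"
      using r(2) by (auto simp: dist_norm)
    then have "g u < 1" "g (- u) < 1"
      using minkowski_gauge_less_iff[OF zero_less_one] by blast+
    then show "u \<in> tangent_unit_ball C x"
      by (simp add: tangent_unit_ball_eq_minkowski_gauge)
  qed
  then have "measure lebesgue (ball (0::'a) r) \<le> measure lebesgue (tangent_unit_ball C x)"
    by (intro measure_mono_fmeasurable lmeasurable_tangent_unit_ball) auto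
  moreover have "measure lebesgue (ball (0::'a) r) > 0"
    using content_ball_pos[OF r(1)] by simp
  ultimately show ?thesis by linarith
qed

lemma affine_tangent_unit_ball_subset_hilbert_ball:
  assumes "R > 0"
  shows "(\<lambda>v. ((exp (2 * R) - 1) / (2 * exp (2 * R))) *\<^sub>R v + x) ` tangent_unit_ball C x
    \<subseteq> hilbert_ball C x R"
proof
  fix y
  define E where "E = exp (2 * R)"
  define c where "c = (E - 1) / (2 * E)"
  have "E > 1" "c > 0"
    using assms by (simp_all add: E_def c_def)
  assume "y \<in> (\<lambda>v. ((exp (2 * R) - 1) / (2 * exp (2 * R))) *\<^sub>R v + x) ` tangent_unit_ball C x"
  then obtain v where v: "g v + g (- v) < 2" "y = c *\<^sub>R v + x"
    by (auto simp: tangent_unit_ball_eq_minkowski_gauge E_def c_def)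
  have "E * g (y - x) + g (x - y) = c * (E * g v + g (- v))"
    using v(2) \<open>c > 0\<close> minkowski_gauge_scaleR[of c C x v] minkowski_gauge_scaleR[of c C x "- v"]
    by (simp add: algebra_simps)
  also have "\<dots> \<le> c * (E * (g v + g (- v)))"
    using \<open>c > 0\<close> \<open>E > 1\<close> mult_right_mono[of 1 E "g (- v)"] minkowski_gauge_nonneg[of C x "- v"]
    by (intro mult_left_mono) (auto simp: algebra_simps)
  also have "\<dots> < c * (E * 2)"
    using \<open>c > 0\<close> \<open>E > 1\<close> v(1) by simp
  also have "\<dots> = E - 1"
    using \<open>E > 1\<close> by (simp add: c_def)
  finally show "y \<in> hilbert_ball C x R"
    by (simp add: hilbert_ball_eq_minkowski_gauge E_def)
qed

lemma hilbert_ball_subset_affine_tangent_unit_ball: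
  assumes "R > 0"
  shows "hilbert_ball C x R
    \<subseteq> (\<lambda>v. ((exp (2 * R) - 1) / 2) *\<^sub>R v + x) ` tangent_unit_ball C x"
proof
  fix y
  define E where "E = exp (2 * R)"
  define c where "c = (E - 1) / 2"
  have "E > 1" "c > 0"
    using assms by (simp_all add: E_def c_def)
  assume "y \<in> hilbert_ball C x R"
  then have y: "E * g (y - x) + g (x - y) < E - 1"
    by (simp add: hilbert_ball_eq_minkowski_gauge E_def)
  define v where "v = (1 / c) *\<^sub>R (y - x)"
  have "g v + g (- v) = (1 / c) * (g (y - x) + g (x - y))"
    using \<open>c > 0\<close> minkowski_gauge_scaleR[of "1 / c" C x "y - x"]
      minkowski_gauge_scaleR[of "1 / c" C x "x - y"]
    by (simp add: v_def algebra_simps)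
  also have "\<dots> \<le> (1 / c) * (E * g (y - x) + g (x - y))"
    using \<open>c > 0\<close> \<open>E > 1\<close> mult_right_mono[of 1 E "g (y - x)"] minkowski_gauge_nonneg[of C x "y - x"]
    by (intro mult_left_mono) auto
  also have "\<dots> < (1 / c) * (E - 1)"
    using \<open>c > 0\<close> y by (simp add: divide_strict_right_mono)
  also have "\<dots> = 2"
    using \<open>E > 1\<close> by (simp add: c_def divide_simps)
  finally have "v \<in> tangent_unit_ball C x"
    by (simp add: tangent_unit_ball_eq_minkowski_gauge)
  moreover have "y = c *\<^sub>R v + x"
    using \<open>c > 0\<close> by (simp add: v_def)
  ultimately show "y \<in> (\<lambda>v. ((exp (2 * R) - 1) / 2) *\<^sub>R v + x) ` tangent_unit_ball C x"
    by (auto simp: c_def E_def)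
qed

end

theorem mainTheorem12:
  fixes C :: "'a::euclidean_space set" and x :: 'a and R :: real
  assumes "bounded C" and "open C" and "convex C" and "x \<in> C" and "R > 0"
  shows "((exp (2 * R) - 1) / (2 * exp (2 * R))) ^ DIM('a)
           \<le> measure lebesgue (hilbert_ball C x R) / measure lebesgue (tangent_unit_ball C x)
       \<and> measure lebesgue (hilbert_ball C x R) / measure lebesgue (tangent_unit_ball C x)
           \<le> ((exp (2 * R) - 1) / 2) ^ DIM('a)"
proof -
  interpret hilbert_domain C x
    using assms(1-4) by unfold_locales
  define c\<^sub>1 where "c\<^sub>1 = (exp (2 * R) - 1) / (2 * exp (2 * R))"
  define c\<^sub>2 where "c\<^sub>2 = (exp (2 * R) - 1) / 2"
  have "c\<^sub>1 > 0" "c\<^sub>2 > 0"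
    using assms(5) by (simp_all add: c\<^sub>1_def c\<^sub>2_def)
  have "\<bar>c\<^sub>1\<bar> ^ DIM('a) * measure lebesgue (tangent_unit_ball C x)
      \<le> measure lebesgue (hilbert_ball C x R)"
    using measure_affine_image_le[OF lmeasurable_tangent_unit_ball lmeasurable_hilbert_ball
        affine_tangent_unit_ball_subset_hilbert_ball[OF assms(5)]]
    by (simp add: c\<^sub>1_def)
  moreover have "measure lebesgue (hilbert_ball C x R)
      \<le> \<bar>c\<^sub>2\<bar> ^ DIM('a) * measure lebesgue (tangent_unit_ball C x)"
    using measure_le_affine_image[OF lmeasurable_hilbert_ball lmeasurable_tangent_unit_ball _
        hilbert_ball_subset_affine_tangent_unit_ball[OF assms(5)]] \<open>c\<^sub>2 > 0\<close>
    by (simp add: c\<^sub>2_def)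
  ultimately show ?thesis
    using measure_tangent_unit_ball_pos \<open>c\<^sub>1 > 0\<close> \<open>c\<^sub>2 > 0\<close>
    by (simp add: c\<^sub>1_def c\<^sub>2_def pos_le_divide_eq pos_divide_le_eq)
qed

end
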